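(* Let $n\ge3$, $\tau>0$, $\varepsilon\neq0$, and $\kappa\in so(n)$ fixed. Consider the generalized Demchenko case without twisting: curves $(\omega(t),\gamma(t))\in so(n)\times S^{n-1}$ with $\omega\in\mathbb R^n\wedge\gamma$ satisfying $$\tau\dot\omega=[\kappa,\omega]+\lambda_0,\qquad \dot\gamma=-\varepsilon\omega\gamma,$$ where $\lambda_0(t)\in so(n)$ is orthogonal to $\mathbb R^n\wedge\gamma$ (and is determined by the condition $\omega\in\mathbb R^n\wedge\gamma$). These equations reduce to the system on $T^*S^{n-1}=\{(\gamma,p):\langle\gamma,\gamma\rangle=1,\langle\gamma,p\rangle=0\}$ $$\dot\gamma=\frac{\varepsilon^2}\tau p,\qquad \dot p=\frac1\tau\kappa p+\mu\gamma,\qquad \mu=\frac1\tau\langle p,\kappa\gamma\rangle-\frac{\varepsilon^2}\tau\langle p,p\rangle,$$ which is the magnetic geodesic flow with Hamiltonian $h=\frac{\varepsilon^2}{2\tau}\langle p,p\rangle$ with respect to the Poisson bracket $$\{F,G\}_d=\{F,G\}^\kappa-\frac{\{F,\phi_1\}^\kappa\{G,\phi_2\}^\kappa-\{F,\phi_2\}^\kappa\{G,\phi_1\}^\kappa}{\{\phi_1,\phi_2\}^\kappa},$$ restricted to $T^*S^{n-1}$, where $\phi_1=\langle\gamma,\gamma\rangle$, $\phi_2=\langle\gamma,p\rangle$ and $\{F,G\}^\kappa=\sum_i\big(\frac{\partial F}{\partial\gamma_i}\frac{\partial G}{\partial p_i}-\frac{\partial F}{\partial p_i}\frac{\partial G}{\partial\gamma_i}\big)+\frac1{\varepsilon^2}\sum_{i,j}\kappa_{ij}\frac{\partial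 F}{\partial p_i}\frac{\partial G}{\partial p_j}$.
   Context: Physically: a balanced $n$-dimensional ball with gyroscope rolls without slipping and twisting over a fixed sphere, with $\varepsilon=b/(b\pm a)$ ($a,b$ the radii), and the modified inertia operator is $\mathbf I=\tau\,\mathrm{Id}_{so(n)}$. On $so(n)$, $\langle X,Y\rangle=-\frac12\operatorname{tr}(XY)$; on $\mathbb R^n$ the Euclidean product; $x\wedge y=xy^T-yx^T$; $\mathbb R^n\wedge\gamma=\{x\wedge\gamma:x\in\mathbb R^n\}$; $\kappa_{ij}$ are the entries of $\kappa$. "Reduce" means: for a solution, $p=\frac\tau{\varepsilon^2}\dot\gamma$ and $(\gamma,p)$ solves the stated system. *)

theory Defs
  imports "HOL-Analysis.Analysis"
begin

definition so :: "(real^'n^'n) set" where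
  "so = {X. transpose X = - X}"

definition so_inner :: "real^'n^'n \<Rightarrow> real^'n^'n \<Rightarrow> real" where
  "so_inner X Y = - (1/2) * trace (X ** Y)"

definition wedge :: "real^'n \<Rightarrow> real^'n \<Rightarrow> real^'n^'n" where
  "wedge x y = (\<chi> i j. x$i * y$j - y$i * x$j)"

definition lie_br :: "real^'n^'n \<Rightarrow> real^'n^'n \<Rightarrow> real^'n^'n" where
  "lie_br A B = A ** B - B ** A"

definition pd_gamma :: "((real^'n) \<times> (real^'n) \<Rightarrow> real) \<Rightarrow> (real^'n) \<times> (real^'n) \<Rightarrow> 'n \<Rightarrow> real" where
  "pd_gamma F z i = frechet_derivative F (at z) (axis i 1, 0)"

definition pd_p :: "((real^'n) \<times> (real^'n) \<Rightarrow> real) \<Rightarrow> (real^'n) \<times> (real^'n) \<Rightarrow> 'n \<Rightarrow> real" where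
  "pd_p F z i = frechet_derivative F (at z) (0, axis i 1)"

definition kappa_bracket :: "real \<Rightarrow> real^'n^'n \<Rightarrow> ((real^'n) \<times> (real^'n) \<Rightarrow> real)
    \<Rightarrow> ((real^'n) \<times> (real^'n) \<Rightarrow> real) \<Rightarrow> (real^'n) \<times> (real^'n) \<Rightarrow> real" where
  "kappa_bracket eps \<kappa> F G z =
     (\<Sum>i\<in>UNIV. pd_gamma F z i * pd_p G z i - pd_p F z i * pd_gamma G z i)
     + (1 / eps^2) * (\<Sum>i\<in>UNIV. \<Sum>j\<in>UNIV. \<kappa>$i$j * pd_p F z i * pd_p G z j)"

definition phi1 :: "(real^'n) \<times> (real^'n) \<Rightarrow> real" where
  "phi1 z = fst z \<bullet> fst z"

definition phi2 :: "(real^'n) \<times> (real^'n) \<Rightarrow> real" where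
  "phi2 z = fst z \<bullet> snd z"

definition dirac_bracket :: "real \<Rightarrow> real^'n^'n \<Rightarrow> ((real^'n) \<times> (real^'n) \<Rightarrow> real)
    \<Rightarrow> ((real^'n) \<times> (real^'n) \<Rightarrow> real) \<Rightarrow> (real^'n) \<times> (real^'n) \<Rightarrow> real" where
  "dirac_bracket eps \<kappa> F G z =
     kappa_bracket eps \<kappa> F G z
     - (kappa_bracket eps \<kappa> F phi1 z * kappa_bracket eps \<kappa> G phi2 z
        - kappa_bracket eps \<kappa> F phi2 z * kappa_bracket eps \<kappa> G phi1 z)
       / kappa_bracket eps \<kappa> phi1 phi2 z"

definition cotS :: "((real^'n) \<times> (real^'n)) set" where
  "cotS = {(g, p). g \<bullet> g = 1 \<and> g \<bullet> p = 0}"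

definition ham :: "real \<Rightarrow> real \<Rightarrow> (real^'n) \<times> (real^'n) \<Rightarrow> real" where
  "ham eps \<tau> z = eps^2 / (2 * \<tau>) * (snd z \<bullet> snd z)"

definition mu :: "real \<Rightarrow> real \<Rightarrow> real^'n^'n \<Rightarrow> real^'n \<Rightarrow> real^'n \<Rightarrow> real" where
  "mu eps \<tau> \<kappa> g p = (1/\<tau>) * (p \<bullet> (\<kappa> *v g)) - (eps^2/\<tau>) * (p \<bullet> p)"

definition red_field :: "real \<Rightarrow> real \<Rightarrow> real^'n^'n \<Rightarrow> (real^'n) \<times> (real^'n) \<Rightarrow> (real^'n) \<times> (real^'n)" where
  "red_field eps \<tau> \<kappa> z =
     ((eps^2/\<tau>) *\<^sub>R snd z,
      (1/\<tau>) *\<^sub>R (\<kappa> *v snd z) + mu eps \<tau> \<kappa> (fst z) (snd z) *\<^sub>R fst z)"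

end

theory Submission
  imports Defs
begin

text \<open>
  Write \<open>\<omega> = x \<and> \<gamma>\<close> with \<open>|\<gamma>| = 1\<close>. The vector \<open>y = \<omega> \<gamma>\<close> is orthogonal to \<open>\<gamma>\<close>, and \<open>\<omega>\<close> maps
  every \<open>v \<bottom> \<gamma>\<close> to \<open>-\<langle>y, v\<rangle> \<gamma>\<close>. A skew \<open>\<lambda>\<^sub>0\<close> orthogonal to all wedges with \<open>\<gamma>\<close> satisfies
  \<open>\<langle>\<lambda>\<^sub>0, x \<and> \<gamma>\<rangle> = \<langle>x, \<lambda>\<^sub>0 \<gamma>\<rangle>\<close>, hence annihilates \<open>\<gamma>\<close>. Differentiating \<open>p = -(\<tau>/\<epsilon>) y\<close> with the
  product rule, the terms \<open>\<omega> \<kappa> \<gamma>\<close> and \<open>\<omega>\<^sup>2 \<gamma>\<close> are therefore multiples of \<open>\<gamma>\<close>, and together they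
  give exactly \<open>\<mu> \<gamma>\<close>.

  On \<open>T*S\<^sup>n\<^sup>-\<^sup>1\<close> the Dirac correction is explicit: \<open>{\<phi>\<^sub>1,\<phi>\<^sub>2}\<^sup>\<kappa> = 2\<close>, \<open>{h,\<phi>\<^sub>1}\<^sup>\<kappa> = 0\<close>,
  \<open>{h,\<phi>\<^sub>2}\<^sup>\<kappa> = \<mu>\<close> and \<open>{F,\<phi>\<^sub>1}\<^sup>\<kappa> = -2 \<langle>\<partial>F/\<partial>p, \<gamma>\<rangle>\<close>, so
  \<open>{F,h}\<^sub>d = {F,h}\<^sup>\<kappa> + \<mu> \<langle>\<partial>F/\<partial>p, \<gamma>\<rangle>\<close>, which is \<open>dF\<close> applied to the reduced vector field.
\<close>

lemma so_inner_mult_vec_swap: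
  assumes "L \<in> so"
  shows "g \<bullet> (L *v x) = - (x \<bullet> (L *v g))"
proof -
  have "transpose L *v g = - (L *v g)"
    using assms by (simp add: so_def vec_eq_iff matrix_vector_mult_def sum_negf)
  then show ?thesis
    by (metis dot_lmul_matrix inner_commute inner_minus_left transpose_matrix_vector)
qed

lemma so_inner_mult_vec_self:
  assumes "L \<in> so"
  shows "g \<bullet> (L *v g) = 0"
  using so_inner_mult_vec_swap[OF assms, of g g] by simp

lemma wedge_mult_vec: "wedge x g *v v = (g \<bullet> v) *\<^sub>R x - (x \<bullet> v) *\<^sub>R g"
  by (simp add: vec_eq_iff wedge_def matrix_vector_mult_def inner_vec_def algebra_simps
      sum_subtractf sum_distrib_left)

lemma trace_mult_wedge: "trace (L ** wedge x g) = g \<bullet> (L *v x) - x \<bullet> (L *v g)"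
  by (simp add: trace_def wedge_def matrix_matrix_mult_def matrix_vector_mult_def inner_vec_def
      algebra_simps sum_subtractf sum_distrib_left)

lemma so_inner_wedge:
  assumes "L \<in> so"
  shows "so_inner L (wedge x g) = x \<bullet> (L *v g)"
  using so_inner_mult_vec_swap[OF assms, of g x] by (simp add: so_inner_def trace_mult_wedge)

lemma so_orthogonal_wedges_mult_vec:
  assumes "L \<in> so" and "\<And>x. so_inner L (wedge x g) = 0"
  shows "L *v g = 0"
  using assms(2)[of "L *v g"] by (simp add: so_inner_wedge[OF assms(1)])

lemma inner_wedge_mult_vec_self:
  assumes "g \<bullet> g = 1"
  shows "g \<bullet> (wedge x g *v g) = 0"
  using assms by (simp add: wedge_mult_vec inner_diff_right inner_commute)

lemma wedge_mult_vec_orthogonal: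
  assumes "g \<bullet> g = 1" and "g \<bullet> v = 0"
  shows "wedge x g *v v = - ((wedge x g *v g) \<bullet> v) *\<^sub>R g"
  using assms by (simp add: wedge_mult_vec inner_diff_left inner_diff_right inner_commute)

lemma bounded_bilinear_matrix_vector_mult:
  "bounded_bilinear (\<lambda>(A::real^'n^'m) (v::real^'n). A *v v)"
  unfolding bilinear_conv_bounded_bilinear[symmetric] bilinear_def
  by (auto simp: linear_iff matrix_vector_mult_def vec_eq_iff algebra_simps sum.distrib
      sum_distrib_left)

lemma matrix_vector_mult_uminus_right: "A *v (- v) = - (A *v (v::real^'n))"
  by (rule linear_neg[OF matrix_vector_mul_linear])

lemma has_vector_derivative_omega_mult_gamma:
  fixes \<omega> :: "real \<Rightarrow> real^'n^'n" and \<gamma> :: "real \<Rightarrow> real^'n" and t :: real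
  defines "g \<equiv> \<gamma> t" and "y \<equiv> \<omega> t *v \<gamma> t"
  assumes \<kappa>: "\<kappa> \<in> so" and sphere: "g \<bullet> g = 1" and wedge: "\<omega> t = wedge x g"
    and L: "L *v g = 0"
    and \<omega>': "(\<omega> has_vector_derivative (1/\<tau>) *\<^sub>R (lie_br \<kappa> (\<omega> t) + L)) (at t)"
    and \<gamma>': "(\<gamma> has_vector_derivative - eps *\<^sub>R y) (at t)"
  shows "((\<lambda>s. \<omega> s *v \<gamma> s) has_vector_derivative
           (1/\<tau>) *\<^sub>R (\<kappa> *v y) + ((1/\<tau>) * (y \<bullet> (\<kappa> *v g)) + eps * (y \<bullet> y)) *\<^sub>R g) (at t)"
proof -
  have "((\<lambda>s. \<omega> s *v \<gamma> s) has_vector_derivative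
          ((1/\<tau>) *\<^sub>R (lie_br \<kappa> (\<omega> t) + L)) *v g + \<omega> t *v (- eps *\<^sub>R y)) (at t)"
    using bounded_bilinear.has_vector_derivative[OF bounded_bilinear_matrix_vector_mult \<omega>' \<gamma>']
    by (simp add: g_def add.commute)
  moreover have "\<omega> t *v (\<kappa> *v g) = - (y \<bullet> (\<kappa> *v g)) *\<^sub>R g"
    unfolding y_def g_def[symmetric] wedge
    using sphere so_inner_mult_vec_self[OF \<kappa>] by (rule wedge_mult_vec_orthogonal)
  moreover have "\<omega> t *v y = - (y \<bullet> y) *\<^sub>R g"
    unfolding y_def g_def[symmetric] wedge
    using sphere inner_wedge_mult_vec_self[OF sphere] by (rule wedge_mult_vec_orthogonal)
  ultimately show ?thesis
    using L
    by (simp add: lie_br_def y_def g_def matrix_vector_mult_uminus_right matrix_vector_mult_add_rdistrib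
        matrix_vector_mult_diff_rdistrib matrix_vector_mul_assoc matrix_vector_mult_scaleR
        scaleR_matrix_vector_assoc[symmetric] algebra_simps)
qed

lemma reduced_equations_of_motion:
  fixes \<omega> :: "real \<Rightarrow> real^'n^'n" and \<gamma> :: "real \<Rightarrow> real^'n" and t \<tau> eps :: real
  defines "p \<equiv> \<lambda>s. (\<tau> / eps^2) *\<^sub>R vector_derivative \<gamma> (at s)"
  assumes \<tau>: "\<tau> \<noteq> 0" and eps: "eps \<noteq> 0" and \<kappa>: "\<kappa> \<in> so" and I: "open I" "t \<in> I"
    and sphere: "\<gamma> t \<bullet> \<gamma> t = 1" and wedge: "\<exists>x. \<omega> t = wedge x (\<gamma> t)" and L: "L *v \<gamma> t = 0"
    and \<omega>': "(\<omega> has_vector_derivative (1/\<tau>) *\<^sub>R (lie_br \<kappa> (\<omega> t) + L)) (at t)"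
    and \<gamma>': "\<And>s. s \<in> I \<Longrightarrow> (\<gamma> has_vector_derivative - eps *\<^sub>R (\<omega> s *v \<gamma> s)) (at s)"
  shows "(\<gamma> t, p t) \<in> cotS"
    and "(\<gamma> has_vector_derivative (eps^2/\<tau>) *\<^sub>R p t) (at t)"
    and "(p has_vector_derivative (1/\<tau>) *\<^sub>R (\<kappa> *v p t) + mu eps \<tau> \<kappa> (\<gamma> t) (p t) *\<^sub>R \<gamma> t) (at t)"
proof -
  obtain x where wedge_x: "\<omega> t = wedge x (\<gamma> t)"
    using wedge by blast
  define y where "y s = \<omega> s *v \<gamma> s" for s
  define c where "c = - \<tau> / eps"
  have p_y: "p s = c *\<^sub>R y s" if "s \<in> I" for s
    using vector_derivative_at[OF \<gamma>'[OF that]] eps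
    by (simp add: p_def y_def c_def power2_eq_square)
  have \<gamma>_y: "\<gamma> t \<bullet> y t = 0"
    using inner_wedge_mult_vec_self[OF sphere] by (simp add: wedge_x y_def)
  show "(\<gamma> t, p t) \<in> cotS"
    using sphere \<gamma>_y p_y[OF I(2)] by (simp add: cotS_def)
  show "(\<gamma> has_vector_derivative (eps^2/\<tau>) *\<^sub>R p t) (at t)"
    using \<gamma>'[OF I(2)] p_y[OF I(2)] \<tau> eps by (simp add: y_def c_def power2_eq_square)
  have "(y has_vector_derivative
          (1/\<tau>) *\<^sub>R (\<kappa> *v y t) + ((1/\<tau>) * (y t \<bullet> (\<kappa> *v \<gamma> t)) + eps * (y t \<bullet> y t)) *\<^sub>R \<gamma> t)
        (at t)" (is "(_ has_vector_derivative ?y') _")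
    unfolding y_def using has_vector_derivative_omega_mult_gamma[OF \<kappa> sphere wedge_x L \<omega>' \<gamma>'[OF I(2)]] .
  then have "((\<lambda>s. c *\<^sub>R y s) has_vector_derivative c *\<^sub>R ?y') (at t)"
    by (rule bounded_linear.has_vector_derivative[OF bounded_linear_scaleR_right])
  also have "c *\<^sub>R ?y' = (1/\<tau>) *\<^sub>R (\<kappa> *v p t) + mu eps \<tau> \<kappa> (\<gamma> t) (p t) *\<^sub>R \<gamma> t"
    using \<tau> eps p_y[OF I(2)]
    by (simp add: mu_def c_def matrix_vector_mult_scaleR matrix_vector_mult_uminus_right
        algebra_simps power2_eq_square)
  finally show "(p has_vector_derivative (1/\<tau>) *\<^sub>R (\<kappa> *v p t) + mu eps \<tau> \<kappa> (\<gamma> t) (p t) *\<^sub>R \<gamma> t) (at t)"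
    using has_vector_derivative_transform_within_open[OF _ I] p_y by metis
qed

definition grad_gamma :: "((real^'n) \<times> (real^'n) \<Rightarrow> real) \<Rightarrow> (real^'n) \<times> (real^'n) \<Rightarrow> real^'n"
  where "grad_gamma F z = (\<chi> i. pd_gamma F z i)"

definition grad_p :: "((real^'n) \<times> (real^'n) \<Rightarrow> real) \<Rightarrow> (real^'n) \<times> (real^'n) \<Rightarrow> real^'n"
  where "grad_p F z = (\<chi> i. pd_p F z i)"

lemma kappa_bracket_grad:
  "kappa_bracket eps \<kappa> F G z =
     grad_gamma F z \<bullet> grad_p G z - grad_p F z \<bullet> grad_gamma G z
     + (1/eps^2) * (grad_p F z \<bullet> (\<kappa> *v grad_p G z))"
  unfolding kappa_bracket_def grad_gamma_def grad_p_def inner_vec_def matrix_vector_mult_def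
  by (simp add: sum_subtractf sum_distrib_left mult.assoc mult.left_commute)

lemma linear_pair_grad_expansion:
  fixes D :: "(real^'n) \<times> (real^'n) \<Rightarrow> real"
  assumes "linear D"
  shows "D (u, v) = (\<chi> i. D (axis i 1, 0)) \<bullet> u + (\<chi> i. D (0, axis i 1)) \<bullet> v"
proof -
  have basis: "(\<Sum>i\<in>UNIV. w$i *\<^sub>R axis i 1) = w" for w :: "real^'n"
    using basis_expansion[of w] by (simp add: scalar_mult_eq_scaleR)
  have "(u, v) = (\<Sum>i\<in>UNIV. u$i *\<^sub>R (axis i 1, 0)) + (\<Sum>i\<in>UNIV. v$i *\<^sub>R (0, axis i 1))"
    by (simp add: sum_prod basis)
  then have "D (u, v) = (\<Sum>i\<in>UNIV. u$i *\<^sub>R D (axis i 1, 0)) + (\<Sum>i\<in>UNIV. v$i *\<^sub>R D (0, axis i 1))"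
    by (simp only: linear_add[OF assms] linear_sum[OF assms] linear_scale[OF assms] o_def)
  then show ?thesis
    by (simp add: inner_vec_def mult.commute)
qed

lemma frechet_derivative_grad:
  assumes "F differentiable (at z)"
  shows "frechet_derivative F (at z) (u, v) = grad_gamma F z \<bullet> u + grad_p F z \<bullet> v"
  unfolding grad_gamma_def grad_p_def pd_gamma_def pd_p_def
  using assms frechet_derivative_works has_derivative_linear linear_pair_grad_expansion by blast

lemma grad_eqI:
  assumes "(F has_derivative (\<lambda>w. a \<bullet> fst w + b \<bullet> snd w)) (at z)"
  shows "grad_gamma F z = a" and "grad_p F z = b"
  using frechet_derivative_at[OF assms, symmetric]
  by (simp_all add: grad_gamma_def grad_p_def pd_gamma_def pd_p_def vec_eq_iff inner_axis)

lemma grad_ham: "grad_gamma (ham eps \<tau>) z = 0" "grad_p (ham eps \<tau>) z = (eps^2/\<tau>) *\<^sub>R snd z"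
proof -
  have "(ham eps \<tau> has_derivative (\<lambda>w. 0 \<bullet> fst w + ((eps^2/\<tau>) *\<^sub>R snd z) \<bullet> snd w)) (at z)"
    unfolding ham_def[abs_def]
    by (intro derivative_eq_intros ext) (auto simp: inner_commute)
  then show "grad_gamma (ham eps \<tau>) z = 0" "grad_p (ham eps \<tau>) z = (eps^2/\<tau>) *\<^sub>R snd z"
    by (rule grad_eqI)+
qed

lemma grad_phi1: "grad_gamma phi1 z = 2 *\<^sub>R fst z" "grad_p phi1 z = 0"
proof -
  have "(phi1 has_derivative (\<lambda>w. (2 *\<^sub>R fst z) \<bullet> fst w + 0 \<bullet> snd w)) (at z)"
    unfolding phi1_def[abs_def]
    by (intro derivative_eq_intros ext) (auto simp: inner_commute)
  then show "grad_gamma phi1 z = 2 *\<^sub>R fst z" "grad_p phi1 z = 0"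
    by (rule grad_eqI)+
qed

lemma grad_phi2: "grad_gamma phi2 z = snd z" "grad_p phi2 z = fst z"
proof -
  have "(phi2 has_derivative (\<lambda>w. snd z \<bullet> fst w + fst z \<bullet> snd w)) (at z)"
    unfolding phi2_def[abs_def]
    by (intro derivative_eq_intros ext) (auto simp: inner_commute)
  then show "grad_gamma phi2 z = snd z" "grad_p phi2 z = fst z"
    by (rule grad_eqI)+
qed

lemma red_field_eq_dirac_bracket_ham:
  assumes \<kappa>: "\<kappa> \<in> so" and eps: "eps \<noteq> 0" and z: "z \<in> cotS" and F: "F differentiable (at z)"
  shows "frechet_derivative F (at z) (red_field eps \<tau> \<kappa> z) = dirac_bracket eps \<kappa> F (ham eps \<tau>) z"
proof -
  obtain g p where z_gp: "fst z = g" "snd z = p" and gg: "g \<bullet> g = 1" and gp: "g \<bullet> p = 0"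
    using z unfolding cotS_def by auto
  define a b where "a = grad_gamma F z" and "b = grad_p F z"
  note brackets = kappa_bracket_grad grad_ham grad_phi1 grad_phi2 a_def[symmetric] b_def[symmetric]
  have F_ham: "kappa_bracket eps \<kappa> F (ham eps \<tau>) z = (eps^2/\<tau>) * (a \<bullet> p) + (1/\<tau>) * (b \<bullet> (\<kappa> *v p))"
    using eps by (simp add: brackets z_gp matrix_vector_mult_scaleR)
  have F_phi1: "kappa_bracket eps \<kappa> F phi1 z = - 2 * (b \<bullet> g)"
    by (simp add: brackets z_gp)
  have ham_phi1: "kappa_bracket eps \<kappa> (ham eps \<tau>) phi1 z = 0"
    by (simp add: brackets z_gp gp inner_commute)
  have ham_phi2: "kappa_bracket eps \<kappa> (ham eps \<tau>) phi2 z = mu eps \<tau> \<kappa> g p"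
    using eps by (simp add: brackets z_gp mu_def)
  have phi1_phi2: "kappa_bracket eps \<kappa> phi1 phi2 z = 2"
    by (simp add: brackets z_gp gg)
  have "frechet_derivative F (at z) (red_field eps \<tau> \<kappa> z)
      = (eps^2/\<tau>) * (a \<bullet> p) + (1/\<tau>) * (b \<bullet> (\<kappa> *v p)) + mu eps \<tau> \<kappa> g p * (b \<bullet> g)"
    by (simp add: frechet_derivative_grad[OF F] red_field_def z_gp a_def b_def inner_add_right)
  then show ?thesis
    by (simp add: dirac_bracket_def F_ham F_phi1 ham_phi1 ham_phi2 phi1_phi2)
qed

theorem proposition9p2:
  fixes \<tau> eps :: real and \<kappa> :: "real^'n^'n"
    and I :: "real set"
    and \<omega> lam0 :: "real \<Rightarrow> real^'n^'n" and \<gamma> :: "real \<Rightarrow> real^'n"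
  assumes n3: "CARD('n) \<ge> 3"
    and tau_pos: "\<tau> > 0" and eps_nz: "eps \<noteq> 0"
    and kappa_so: "\<kappa> \<in> so"
    and I_open: "open I"
    and gamma_sphere: "\<And>t. t \<in> I \<Longrightarrow> norm (\<gamma> t) = 1"
    and omega_wedge: "\<And>t. t \<in> I \<Longrightarrow> \<exists>x. \<omega> t = wedge x (\<gamma> t)"
    and lambda_so: "\<And>t. t \<in> I \<Longrightarrow> lam0 t \<in> so"
    and lambda_orth: "\<And>t x. t \<in> I \<Longrightarrow> so_inner (lam0 t) (wedge x (\<gamma> t)) = 0"
    and eq_omega: "\<And>t. t \<in> I \<Longrightarrow>
        (\<omega> has_vector_derivative ((1/\<tau>) *\<^sub>R (lie_br \<kappa> (\<omega> t) + lam0 t))) (at t)"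
    and eq_gamma: "\<And>t. t \<in> I \<Longrightarrow>
        (\<gamma> has_vector_derivative (- eps *\<^sub>R (\<omega> t *v \<gamma> t))) (at t)"
  shows
    "(\<forall>t\<in>I.
        let p = (\<lambda>s. (\<tau> / eps^2) *\<^sub>R vector_derivative \<gamma> (at s)) in
          (\<gamma> t, p t) \<in> cotS
        \<and> (\<gamma> has_vector_derivative ((eps^2/\<tau>) *\<^sub>R p t)) (at t)
        \<and> (p has_vector_derivative
              ((1/\<tau>) *\<^sub>R (\<kappa> *v p t) + mu eps \<tau> \<kappa> (\<gamma> t) (p t) *\<^sub>R \<gamma> t)) (at t))
     \<and> (\<forall>z\<in>cotS. \<forall>F::(real^'n) \<times> (real^'n) \<Rightarrow> real. F differentiable (at z) \<longrightarrow>
          frechet_derivative F (at z) (red_field eps \<tau> \<kappa> z)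
            = dirac_bracket eps \<kappa> F (ham eps \<tau>) z)"
proof -
  have sphere: "\<gamma> t \<bullet> \<gamma> t = 1" if "t \<in> I" for t
    using gamma_sphere[OF that] by (simp add: dot_square_norm)
  have lam0_\<gamma>: "lam0 t *v \<gamma> t = 0" if "t \<in> I" for t
    using so_orthogonal_wedges_mult_vec[OF lambda_so lambda_orth, OF that that] .
  note reduced = reduced_equations_of_motion[OF _ eps_nz kappa_so I_open _ sphere omega_wedge lam0_\<gamma>
      eq_omega eq_gamma]
  show ?thesis
    using reduced tau_pos red_field_eq_dirac_bracket_ham[OF kappa_so eps_nz]
    unfolding Let_def by simp
qed

end
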